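(* Let $\mathcal{G}=(V,L)$ be a finite connected undirected graph with monitor set $M\subseteq V$ and non-monitor set $N=V\setminus M$, $\sigma=|N|$, and let the measurement paths $P$ be given by Controllable Simple-path Probing (CSP). Let $S\subseteq N$ be nonempty. Then: (a) if $k\le\sigma-2$, $\Gamma_{\mathcal{G}^*}(S,m')\ge k+2$ and $\min_{m\in M}\Gamma_{\mathcal{G}_m}(S,m')\ge k+1$, then $S$ is $k$-identifiable; (b) if $k\le\sigma-1$ and $S$ is $k$-identifiable, then $\Gamma_{\mathcal{G}^*}(S,m')\ge k+1$ and $\min_{m\in M}\Gamma_{\mathcal{G}_m}(S,m')\ge k$.
   Context: Here $k\ge1$ is an integer. Failure model: a failure set is any $F\subseteq N$ (monitors never fail). A measurement path fails iff it traverses at least one node of $F$. $P_F$ denotes the set of paths in $P$ traversing at least one node of $F$. Two failure sets $F_1,F_2$ are distinguishable iff $P_{F_1}\neq P_{F_2}$. A set $S\subseteq N$ is $k$-identifiable if any two failure sets $F_1,F_2\subseteq N$ with $|F_1|,|F_2|\le k$ and $F_1\cap S\neq F_2\cap S$ are distinguishable. Under CSP, $P$ consists of all simple paths (no repeated nodes) in $\mathcal{G}$ between two distinct monitors. For $M'\subseteq M$, $\mathcal{N}(M')$ denotes the set of non-monitors adjacent to at least one monitor in $M'$. The auxiliary graph $\mathcal{G}^*$ is obtained from $\mathcal{G}$ by deleting all monitors, adding a virtual node $m'$, and linking $m'$ to every node of $\mathcal{N}(M)$. For $m\in M$, the auxiliary graph $\mathcal{G}_m$ is obtained from $\mathcal{G}$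 by deleting all monitors, adding a virtual node $m'$, and linking $m'$ to every node of $\mathcal{N}(M\setminus\{m\})$. For nodes $s,t$ of a graph $\mathcal{H}$, $C_{\mathcal{H}}(s,t)$ is a minimum-cardinality set of nodes (other than $s,t$) whose deletion destroys all $s$–$t$ paths; if $s,t$ are adjacent, $C_{\mathcal{H}}(s,t):=V(\mathcal{H})\setminus\{t\}$. $\Gamma_{\mathcal{H}}(S,m):=\min_{w\in S}|C_{\mathcal{H}}(w,m)|$. *)

theory Defs
  imports Main
begin

definition sgraph :: "'a set \<Rightarrow> ('a \<Rightarrow> 'a \<Rightarrow> bool) \<Rightarrow> bool" where
  "sgraph V E \<longleftrightarrow> finite V \<and>
     (\<forall>u v. E u v \<longrightarrow> u \<in> V \<and> v \<in> V \<and> u \<noteq> v \<and> E v u)"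

definition is_path :: "'a set \<Rightarrow> ('a \<Rightarrow> 'a \<Rightarrow> bool) \<Rightarrow> 'a list \<Rightarrow> bool" where
  "is_path V E xs \<longleftrightarrow> xs \<noteq> [] \<and> distinct xs \<and> set xs \<subseteq> V \<and>
     (\<forall>i. Suc i < length xs \<longrightarrow> E (xs ! i) (xs ! Suc i))"

definition connected_graph :: "'a set \<Rightarrow> ('a \<Rightarrow> 'a \<Rightarrow> bool) \<Rightarrow> bool" where
  "connected_graph V E \<longleftrightarrow>
     (\<forall>u\<in>V. \<forall>v\<in>V. \<exists>xs. is_path V E xs \<and> hd xs = u \<and> last xs = v)"

definition CSP_paths :: "'a set \<Rightarrow> ('a \<Rightarrow> 'a \<Rightarrow> bool) \<Rightarrow> 'a set \<Rightarrow> 'a list set" where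
  "CSP_paths V E M = {xs. is_path V E xs \<and> hd xs \<in> M \<and> last xs \<in> M \<and> hd xs \<noteq> last xs}"

definition fail_paths :: "'a list set \<Rightarrow> 'a set \<Rightarrow> 'a list set" where
  "fail_paths P F = {p \<in> P. set p \<inter> F \<noteq> {}}"

definition k_identifiable ::
  "'a set \<Rightarrow> ('a \<Rightarrow> 'a \<Rightarrow> bool) \<Rightarrow> 'a set \<Rightarrow> nat \<Rightarrow> 'a set \<Rightarrow> bool" where
  "k_identifiable V E M k S \<longleftrightarrow>
     (\<forall>F1 F2. F1 \<subseteq> V - M \<and> F2 \<subseteq> V - M \<and> card F1 \<le> k \<and> card F2 \<le> k \<and>
        F1 \<inter> S \<noteq> F2 \<inter> S \<longrightarrow>
        fail_paths (CSP_paths V E M) F1 \<noteq> fail_paths (CSP_paths V E M) F2)"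

definition mon_nbrs :: "'a set \<Rightarrow> ('a \<Rightarrow> 'a \<Rightarrow> bool) \<Rightarrow> 'a set \<Rightarrow> 'a set \<Rightarrow> 'a set" where
  "mon_nbrs V E M M' = {v \<in> V - M. \<exists>m\<in>M'. E m v}"

text \<open>Auxiliary graph: delete all monitors, add a virtual node m' (represented by None),
  link m' to every node of A. Original nodes v are represented as Some v.\<close>
definition aux_V :: "'a set \<Rightarrow> 'a set \<Rightarrow> 'a option set" where
  "aux_V V M = Some ` (V - M) \<union> {None}"

definition aux_E :: "'a set \<Rightarrow> ('a \<Rightarrow> 'a \<Rightarrow> bool) \<Rightarrow> 'a set \<Rightarrow> 'a set \<Rightarrow>
    'a option \<Rightarrow> 'a option \<Rightarrow> bool" where
  "aux_E V E M A x y = (case (x, y) of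
       (Some u, Some v) \<Rightarrow> u \<in> V - M \<and> v \<in> V - M \<and> E u v
     | (None, Some v) \<Rightarrow> v \<in> A
     | (Some u, None) \<Rightarrow> u \<in> A
     | (None, None) \<Rightarrow> False)"

definition cut_size :: "'b set \<Rightarrow> ('b \<Rightarrow> 'b \<Rightarrow> bool) \<Rightarrow> 'b \<Rightarrow> 'b \<Rightarrow> nat" where
  "cut_size HV HE s t =
     (if HE s t then card (HV - {t})
      else (LEAST n. \<exists>C. C \<subseteq> HV - {s, t} \<and> card C = n \<and>
              \<not> (\<exists>xs. is_path (HV - C) HE xs \<and> hd xs = s \<and> last xs = t)))"

definition Gamma :: "'b set \<Rightarrow> ('b \<Rightarrow> 'b \<Rightarrow> bool) \<Rightarrow> 'b set \<Rightarrow> 'b \<Rightarrow> nat" where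
  "Gamma HV HE S t = Min ((\<lambda>w. cut_size HV HE w t) ` S)"

end

theory Submission
  imports Defs
begin

text \<open>Fix \<open>w \<in> S\<close> and a failure set \<open>F\<close> of at most \<open>k\<close> non-monitors with \<open>w \<notin> F\<close>. Under the
  cut conditions of (a), in \<open>\<G> - F\<close> the node \<open>w\<close> still reaches a monitor other than \<open>x\<close> after
  the deletion of any further node \<open>x\<close> (a monitor \<open>x\<close> is handled by \<open>\<G>\<^sub>x\<close>, a non-monitor by the bound \<open>k + 2\<close>
  in \<open>\<G>\<^sup>*\<close>). By the two-path fan form of Menger's theorem, \<open>w\<close> then has two paths to distinct
  monitors meeting only in \<open>w\<close>; together they form a CSP path through \<open>w\<close> that avoids \<open>F\<close> and so
  distinguishes \<open>F\<close> from any failure set containing \<open>w\<close>.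
  Conversely, a small \<open>w\<close>-\<open>m'\<close> separator \<open>C\<close> of \<open>\<G>\<^sup>*\<close> (of \<open>\<G>\<^sub>m\<close>) is crossed by both halves
  (by the half not ending at \<open>m\<close>) of every CSP path through \<open>w\<close>, so that failing \<open>w\<close> in addition
  to (all but one node of) \<open>C\<close> cannot be observed.\<close>

section \<open>Simple paths\<close>

lemma is_path_iff_successively:
  "is_path V E xs \<longleftrightarrow> xs \<noteq> [] \<and> distinct xs \<and> set xs \<subseteq> V \<and> successively E xs"
  unfolding is_path_def successively_conv_nth ..

lemma is_path_Cons:
  "is_path V E (x # xs) \<longleftrightarrow> x \<in> V \<and> x \<notin> set xs \<and> (xs = [] \<or> E x (hd xs) \<and> is_path V E xs)"
  unfolding is_path_iff_successively by (auto simp: successively_Cons)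

lemma is_path_singleton [simp]: "is_path V E [x] \<longleftrightarrow> x \<in> V"
  by (simp add: is_path_Cons)

lemma is_path_append:
  assumes "xs \<noteq> []" "ys \<noteq> []"
  shows "is_path V E (xs @ ys) \<longleftrightarrow>
    is_path V E xs \<and> is_path V E ys \<and> set xs \<inter> set ys = {} \<and> E (last xs) (hd ys)"
  using assms unfolding is_path_iff_successively by (auto simp: successively_append_iff)

lemma is_path_nonempty: "is_path V E xs \<Longrightarrow> xs \<noteq> []"
  unfolding is_path_def by simp

lemma is_path_distinct: "is_path V E xs \<Longrightarrow> distinct xs"
  unfolding is_path_def by simp

lemma is_path_subset: "is_path V E xs \<Longrightarrow> set xs \<subseteq> V"
  unfolding is_path_def by simp

lemma is_path_mono: "is_path V E xs \<Longrightarrow> set xs \<subseteq> W \<Longrightarrow> is_path W E xs"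
  unfolding is_path_iff_successively by simp

lemma is_path_edge_mono:
  assumes "is_path V E xs" "\<And>a b. a \<in> set xs \<Longrightarrow> b \<in> set xs \<Longrightarrow> E a b \<Longrightarrow> E' a b"
  shows "is_path V E' xs"
  using assms unfolding is_path_iff_successively by (auto intro: successively_mono)

lemma is_path_rev:
  assumes "\<And>a b. E a b \<Longrightarrow> E b a" "is_path V E xs"
  shows "is_path V E (rev xs)"
  using assms(2) unfolding is_path_iff_successively by (auto intro: successively_mono assms(1))

definition reaches :: "'a set \<Rightarrow> ('a \<Rightarrow> 'a \<Rightarrow> bool) \<Rightarrow> 'a \<Rightarrow> 'a set \<Rightarrow> bool" where
  "reaches V E s T \<longleftrightarrow> (\<exists>p. is_path V E p \<and> hd p = s \<and> last p \<in> T)"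

section \<open>Two-path fans\<close>

definition two_fan :: "'a set \<Rightarrow> ('a \<Rightarrow> 'a \<Rightarrow> bool) \<Rightarrow> 'a \<Rightarrow> 'a set \<Rightarrow> bool" where
  "two_fan V E s T \<longleftrightarrow> (\<exists>p q. is_path V E p \<and> is_path V E q \<and> hd p = s \<and> hd q = s \<and>
     last p \<in> T \<and> last q \<in> T \<and> last p \<noteq> last q \<and> set p \<inter> set q = {s})"

lemma two_fanI:
  assumes "is_path V E p" "is_path V E q" "hd p = s" "hd q = s" "last p \<in> T" "last q \<in> T"
    "last p \<noteq> last q" "set p \<inter> set q = {s}"
  shows "two_fan V E s T"
  using assms unfolding two_fan_def by blast

lemma two_fan_move_centre_via_branch:
  assumes A1: "is_path V E A1" "hd A1 = u" and A2: "is_path V E A2" "hd A2 = u"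
    and int: "set A1 \<inter> set A2 = {u}"
    and lasts: "last A1 \<in> T" "last A2 \<in> T" "last A1 \<noteq> last A2"
    and s: "s \<notin> set A1" "s \<notin> set A2" "E s u" "s \<in> V"
    and pre: "is_path V E pre" "hd pre = s" "set pre \<inter> (set A1 \<union> set A2) = {}"
    and q0: "q0 \<in> set A1" "q0 \<noteq> u" "E (last pre) q0"
  shows "two_fan V E s T"
proof -
  obtain xs ys where A1s: "A1 = xs @ q0 # ys" using q0(1) by (meson split_list)
  have xs: "xs \<noteq> []" using A1s A1(2) q0(2) by (cases xs) auto
  have tail: "is_path V E (q0 # ys)" using A1(1) A1s xs is_path_append by fastforce
  have "u \<in> set xs" using A1s A1(2) xs by (cases xs) auto
  then have u_tail: "u \<notin> set (q0 # ys)" using is_path_distinct[OF A1(1)] A1s by auto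
  have tail_A1: "set (q0 # ys) \<subseteq> set A1" using A1s by auto
  have pre_ne: "pre \<noteq> []" using is_path_nonempty[OF pre(1)] .
  have s_pre: "s \<in> set pre" using pre_ne pre(2) hd_in_set by blast
  have P: "is_path V E (pre @ q0 # ys)"
    using pre tail_A1 tail q0(3) pre_ne by (subst is_path_append) auto
  have Q: "is_path V E (s # A2)"
    using A2 s is_path_nonempty[OF A2(1)] by (auto simp: is_path_Cons)
  have "set (q0 # ys) \<inter> set A2 = {}" using int tail_A1 u_tail by auto
  then have "set (pre @ q0 # ys) \<inter> set (s # A2) = {s}" using pre(3) s_pre tail_A1 s(1) by auto
  moreover have "last (pre @ q0 # ys) = last A1" using A1s by simp
  moreover have "hd (pre @ q0 # ys) = s" using pre_ne pre(2) by simp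
  ultimately show ?thesis
    using P Q lasts is_path_nonempty[OF A2(1)] by (intro two_fanI[OF P Q]) auto
qed

text \<open>A fan at \<open>u\<close> moves to a neighbour \<open>s\<close> of \<open>u\<close> off the fan, provided \<open>s\<close> reaches \<open>T\<close>
  without passing through \<open>u\<close>: follow that path until it first meets the fan or \<open>T\<close>.\<close>
lemma two_fan_move_centre:
  assumes A1: "is_path V E A1" "hd A1 = u" and A2: "is_path V E A2" "hd A2 = u"
    and int: "set A1 \<inter> set A2 = {u}"
    and lasts: "last A1 \<in> T" "last A2 \<in> T" "last A1 \<noteq> last A2"
    and s: "s \<notin> set A1" "s \<notin> set A2" "E s u" "s \<in> V" "s \<notin> T"
    and reach: "reaches (V - {u}) E s T"
  shows "two_fan V E s T"
proof -
  obtain Q where Q: "is_path (V - {u}) E Q" "hd Q = s" "last Q \<in> T"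
    using reach unfolding reaches_def by blast
  have "\<exists>x\<in>set Q. x \<in> set A1 \<union> set A2 \<union> T" using is_path_nonempty[OF Q(1)] Q(3) by auto
  then obtain pre q0 post where Qs: "Q = pre @ q0 # post" and q0: "q0 \<in> set A1 \<union> set A2 \<union> T"
    and pre_avoids: "\<forall>y\<in>set pre. y \<notin> set A1 \<union> set A2 \<union> T"
    by (rule split_list_first_propE)
  have pre_ne: "pre \<noteq> []" using Qs Q(2) q0 s(1,2,5) by (cases pre) auto
  have "is_path V E (pre @ q0 # post)" using Q(1) Qs is_path_mono is_path_subset by blast
  then have pre: "is_path V E pre" "E (last pre) q0" "q0 \<notin> set pre" "q0 \<in> V"
    using is_path_append[OF pre_ne list.simps(3)] by (auto simp: is_path_Cons)
  have hd_pre: "hd pre = s" using Qs Q(2) pre_ne by simp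
  have pre_disj: "set pre \<inter> (set A1 \<union> set A2) = {}" using pre_avoids by blast
  have q0u: "q0 \<noteq> u" using Qs is_path_subset[OF Q(1)] by auto
  consider "q0 \<in> set A1" | "q0 \<in> set A2" | "q0 \<notin> set A1" "q0 \<notin> set A2" "q0 \<in> T"
    using q0 by blast
  then show ?thesis
  proof cases
    case 1
    show ?thesis
      by (rule two_fan_move_centre_via_branch[OF A1 A2 int lasts(1-3) s(1-4) pre(1) hd_pre
            pre_disj 1 q0u pre(2)])
  next
    case 2
    have "set A2 \<inter> set A1 = {u}" "last A2 \<noteq> last A1" "set pre \<inter> (set A2 \<union> set A1) = {}"
      using int lasts(3) pre_disj by auto
    then show ?thesis
      using two_fan_move_centre_via_branch[OF A2 A1 _ lasts(2,1) _ s(2,1,3,4) pre(1) hd_pre _ 2 q0u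
          pre(2)] by blast
  next
    case 3
    have P: "is_path V E (pre @ [q0])"
      using pre pre_ne by (simp add: is_path_append)
    have Q': "is_path V E (s # A1)"
      using A1 s is_path_nonempty[OF A1(1)] by (simp add: is_path_Cons)
    have "s \<in> set pre" using pre_ne hd_pre hd_in_set by blast
    then have "set (pre @ [q0]) \<inter> set (s # A1) = {s}" using pre_disj 3 by auto
    moreover have "q0 \<noteq> last A1" using 3 last_in_set is_path_nonempty[OF A1(1)] by metis
    ultimately show ?thesis
      using P Q' 3 lasts hd_pre pre_ne is_path_nonempty[OF A1(1)] by (intro two_fanI[OF P Q']) auto
  qed
qed

text \<open>The edge relation after contracting the edge \<open>s u\<close> into \<open>s\<close> (the vertex \<open>u\<close> is then
  deleted from the vertex set).\<close>
definition contract :: "('a \<Rightarrow> 'a \<Rightarrow> bool) \<Rightarrow> 'a \<Rightarrow> 'a \<Rightarrow> 'a \<Rightarrow> 'a \<Rightarrow> bool" where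
  "contract E s u a b \<longleftrightarrow> (E a b \<and> a \<noteq> u \<and> b \<noteq> u) \<or> (a = s \<and> E u b \<and> b \<noteq> s \<and> b \<noteq> u)
     \<or> (b = s \<and> E u a \<and> a \<noteq> s \<and> a \<noteq> u)"

lemma contract_sym: "(\<And>a b. E a b \<Longrightarrow> E b a) \<Longrightarrow> contract E s u a b \<Longrightarrow> contract E s u b a"
  unfolding contract_def by blast

lemma reaches_contract:
  assumes "reaches W E s T" "u \<notin> T" "s \<noteq> u"
  shows "reaches (W - {u}) (contract E s u) s T"
proof -
  obtain p where p: "is_path W E p" "hd p = s" "last p \<in> T" using assms(1) unfolding reaches_def by blast
  show ?thesis
  proof (cases "u \<in> set p")
    case False
    have "is_path W (contract E s u) p"
      using p(1) by (rule is_path_edge_mono) (use False in \<open>auto simp: contract_def\<close>)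
    then have "is_path (W - {u}) (contract E s u) p"
      by (rule is_path_mono) (use False is_path_subset[OF p(1)] in blast)
    then show ?thesis using p(2,3) unfolding reaches_def by blast
  next
    case True
    then obtain xs ys where ps: "p = xs @ u # ys" by (meson split_list)
    have xs: "xs \<noteq> []" using ps p(2) assms(3) by (cases xs) auto
    have ys: "ys \<noteq> []" using ps p(3) assms(2) by auto
    have s_xs: "s \<in> set xs" using ps p(2) xs by (cases xs) auto
    have "is_path W E (u # ys)" "set xs \<inter> set (u # ys) = {}"
      using p(1) unfolding ps is_path_append[OF xs list.simps(3)] by auto
    then have uys: "is_path W E ys" "E u (hd ys)" "u \<notin> set ys" "s \<notin> set ys"
      using ys s_xs unfolding is_path_Cons by auto
    have "is_path W (contract E s u) ys"
      using uys(1) by (rule is_path_edge_mono) (use uys(3) in \<open>auto simp: contract_def\<close>)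
    then have ys': "is_path (W - {u}) (contract E s u) ys"
      by (rule is_path_mono) (use uys(3) is_path_subset[OF uys(1)] in blast)
    have "hd ys \<noteq> s" "hd ys \<noteq> u" using uys(3,4) hd_in_set[OF ys] by auto
    then have "contract E s u s (hd ys)" using uys(2) unfolding contract_def by blast
    moreover have "s \<in> W" using is_path_subset[OF p(1)] ps s_xs by auto
    ultimately have "is_path (W - {u}) (contract E s u) (s # ys)"
      using ys' uys(4) assms(3) ys unfolding is_path_Cons by blast
    moreover have "last (s # ys) = last p" using ps ys by simp
    ultimately show ?thesis using p(3) unfolding reaches_def by (metis list.sel(1))
  qed
qed

lemma is_path_uncontract:
  assumes "is_path (V - {u}) (contract E s u) (s # R)" "R \<noteq> []"
  shows "is_path V E R \<and> u \<notin> set R \<and> s \<notin> set R \<and> (E s (hd R) \<or> E u (hd R))"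
proof -
  have R: "s \<notin> set R" "is_path (V - {u}) (contract E s u) R" "contract E s u s (hd R)"
    using assms unfolding is_path_Cons by auto
  have R': "is_path (V - {u}) E R"
    using R(2) by (rule is_path_edge_mono) (use R(1) in \<open>auto simp: contract_def\<close>)
  then have "is_path V E R" by (rule is_path_mono) (use is_path_subset[OF R'] in blast)
  moreover have "u \<notin> set R" using is_path_subset[OF R(2)] by blast
  moreover have "E s (hd R) \<or> E u (hd R)" using R(3) unfolding contract_def by blast
  ultimately show ?thesis using R(1) by blast
qed

lemma two_fan_of_branches:
  assumes "is_path V E (s # X1)" "is_path V E (s # X2)" "X1 \<noteq> []" "X2 \<noteq> []"
    "set X1 \<inter> set X2 = {}" "last X1 \<in> T" "last X2 \<in> T" "last X1 \<noteq> last X2"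
  shows "two_fan V E s T"
proof (rule two_fanI[OF assms(1,2)])
  show "set (s # X1) \<inter> set (s # X2) = {s}"
    using assms(1,2,5) by (auto simp: is_path_Cons)
qed (use assms(3-8) in auto)

lemma two_fan_uncontract:
  assumes fan: "two_fan (V - {u}) (contract E s u) s T"
    and su: "E s u" "s \<in> V" "u \<in> V" "s \<noteq> u" "s \<notin> T"
    and reach: "reaches (V - {u}) E s T"
  shows "two_fan V E s T"
proof -
  obtain P Q where PQ: "is_path (V - {u}) (contract E s u) P" "is_path (V - {u}) (contract E s u) Q"
    "hd P = s" "hd Q = s" "last P \<in> T" "last Q \<in> T" "last P \<noteq> last Q" "set P \<inter> set Q = {s}"
    using fan unfolding two_fan_def by blast
  obtain R1 R2 where P: "P = s # R1" and Q: "Q = s # R2"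
    using PQ(1-4) is_path_nonempty by (metis list.collapse)
  have R_ne: "R1 \<noteq> []" "R2 \<noteq> []" using P Q PQ(5,6) su(5) by auto
  have R1: "is_path V E R1" "u \<notin> set R1" "s \<notin> set R1" "E s (hd R1) \<or> E u (hd R1)"
    using is_path_uncontract[OF PQ(1)[unfolded P] R_ne(1)] by blast+
  have R2: "is_path V E R2" "u \<notin> set R2" "s \<notin> set R2" "E s (hd R2) \<or> E u (hd R2)"
    using is_path_uncontract[OF PQ(2)[unfolded Q] R_ne(2)] by blast+
  have disj: "set R1 \<inter> set R2 = {}" using PQ(8) P Q R1(3) by auto
  have lasts: "last R1 \<in> T" "last R2 \<in> T" "last R1 \<noteq> last R2" using PQ(5-7) P Q R_ne by auto
  have lift: "is_path V E (s # R)" if "is_path V E R" "R \<noteq> []" "s \<notin> set R" "E s (hd R)" for R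
    using that su by (simp add: is_path_Cons)
  have lift_u: "is_path V E (s # u # R)"
    if "is_path V E R" "R \<noteq> []" "s \<notin> set R" "u \<notin> set R" "E u (hd R)" for R
    using that su by (simp add: is_path_Cons)
  consider "E s (hd R1)" "E s (hd R2)" | "E s (hd R1)" "E u (hd R2)" | "E u (hd R1)" "E s (hd R2)"
    | "\<not> E s (hd R1)" "\<not> E s (hd R2)"
    using R1(4) R2(4) by blast
  then show ?thesis
  proof cases
    case 1
    show ?thesis
      using two_fan_of_branches[OF lift[OF R1(1) R_ne(1) R1(3) 1(1)] lift[OF R2(1) R_ne(2) R2(3) 1(2)]]
        R_ne disj lasts by blast
  next
    case 2
    have "set R1 \<inter> set (u # R2) = {}" "last (u # R2) = last R2" using disj R1(2) R_ne by auto
    then show ?thesis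
      using two_fan_of_branches[OF lift[OF R1(1) R_ne(1) R1(3) 2(1)]
          lift_u[OF R2(1) R_ne(2) R2(3,2) 2(2)]] R_ne disj lasts by auto
  next
    case 3
    have "set (u # R1) \<inter> set R2 = {}" "last (u # R1) = last R1" using disj R2(2) R_ne by auto
    then show ?thesis
      using two_fan_of_branches[OF lift_u[OF R1(1) R_ne(1) R1(3,2) 3(1)]
          lift[OF R2(1) R_ne(2) R2(3) 3(2)]] R_ne disj lasts by auto
  next
    case 4
    \<comment> \<open>Both branches leave through \<open>u\<close>: they form a fan at \<open>u\<close>, which moves back to \<open>s\<close>.\<close>
    then have "E u (hd R1)" "E u (hd R2)" using R1(4) R2(4) by blast+
    then have A: "is_path V E (u # R1)" "is_path V E (u # R2)"
      using R1 R2 R_ne su by (auto simp: is_path_Cons)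
    have "set (u # R1) \<inter> set (u # R2) = {u}" "s \<notin> set (u # R1)" "s \<notin> set (u # R2)"
      "last (u # R1) = last R1" "last (u # R2) = last R2"
      using disj R1(3) R2(3) su(4) R_ne by auto
    then show ?thesis
      using two_fan_move_centre[OF A(1) _ A(2)] lasts su reach by simp
  qed
qed

lemma two_fan_if_adjacent:
  assumes "E s t" "s \<in> V" "t \<in> V" "t \<in> T" "s \<notin> T" "reaches (V - {t}) E s (T - {t})"
  shows "two_fan V E s T"
proof -
  obtain Q where Q: "is_path (V - {t}) E Q" "hd Q = s" "last Q \<in> T - {t}"
    using assms(6) unfolding reaches_def by blast
  have P: "is_path V E [s, t]" using assms(1-5) by (auto simp: is_path_Cons)
  have Q': "is_path V E Q" by (rule is_path_mono[OF Q(1)]) (use is_path_subset[OF Q(1)] in blast)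
  have "s \<in> set Q" using Q(2) hd_in_set[OF is_path_nonempty[OF Q(1)]] by simp
  moreover have "t \<notin> set Q" using is_path_subset[OF Q(1)] by blast
  ultimately have "set [s, t] \<inter> set Q = {s}" by auto
  moreover have "last Q \<in> T" "t \<noteq> last Q" using Q(3) by auto
  ultimately show ?thesis using Q(2) assms(4) by (intro two_fanI[OF P Q']) simp_all
qed

text \<open>The two-path fan version of Menger's theorem, proved by contracting an edge at \<open>s\<close>.\<close>
lemma two_fan_if_no_separating_vertex:
  assumes "finite V" "\<And>a b. E a b \<Longrightarrow> E b a" "s \<notin> T" "reaches V E s T"
    "\<And>x. x \<in> V \<Longrightarrow> x \<noteq> s \<Longrightarrow> reaches (V - {x}) E s (T - {x})"
  shows "two_fan V E s T"
  using assms
proof (induction "card V" arbitrary: V E rule: less_induct)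
  case less
  obtain p0 where p0: "is_path V E p0" "hd p0 = s" "last p0 \<in> T"
    using less.prems(4) unfolding reaches_def by blast
  obtain r where p0s: "p0 = s # r" using p0 is_path_nonempty by (metis list.collapse)
  have r: "r \<noteq> []" using p0s p0(3) less.prems(3) by auto
  define u where "u = hd r"
  have "is_path V E (s # r)" using p0(1) p0s by simp
  then have s: "E s u" "s \<in> V" "u \<in> V" "s \<noteq> u"
    using r hd_in_set[OF r] is_path_subset[of V E r] unfolding u_def is_path_Cons by auto
  show ?case
  proof (cases "\<exists>t\<in>V \<inter> T. E s t")
    case True
    then obtain t where t: "E s t" "t \<in> V" "t \<in> T" by blast
    then have "t \<noteq> s" using less.prems(3) by blast
    then show ?thesis
      by (rule two_fan_if_adjacent[of E s t V T, OF t(1) s(2) t(2,3) less.prems(3) less.prems(5)[OF t(2)]])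
  next
    case False
    then have "u \<notin> T" using s(1,3) by blast
    have "two_fan (V - {u}) (contract E s u) s T"
    proof (rule less.hyps)
      show "card (V - {u}) < card V" using less.prems(1) s(3) by (rule card_Diff1_less)
      show "finite (V - {u})" using less.prems(1) by blast
      show "contract E s u b a" if "contract E s u a b" for a b
        using contract_sym[of E, OF less.prems(2) that] .
      show "reaches (V - {u}) (contract E s u) s T"
        using reaches_contract[OF less.prems(4) \<open>u \<notin> T\<close> s(4)] .
      show "reaches (V - {u} - {x}) (contract E s u) s (T - {x})"
        if "x \<in> V - {u}" "x \<noteq> s" for x
      proof -
        have "V - {x} - {u} = V - {u} - {x}" by blast
        moreover have "u \<notin> T - {x}" using \<open>u \<notin> T\<close> by blast
        ultimately show ?thesis using reaches_contract[OF less.prems(5)[of x] _ s(4)] that by simp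
      qed
    qed (rule less.prems(3))
    moreover have "reaches (V - {u}) E s T"
      using less.prems(5)[OF s(3) s(4)[symmetric]] \<open>u \<notin> T\<close> by simp
    ultimately show ?thesis using two_fan_uncontract[of V u E s T, OF _ s less.prems(3)] by blast
  qed
qed

section \<open>Cuts in the auxiliary graphs\<close>

lemma reaches_singleton: "reaches V E s {t} \<longleftrightarrow> (\<exists>xs. is_path V E xs \<and> hd xs = s \<and> last xs = t)"
  unfolding reaches_def by simp

lemma reaches_aux_iff:
  "reaches (aux_V V M - Some ` C) (aux_E V E M A) (Some w) {None} \<longleftrightarrow> reaches (V - M - C) E w A"
proof
  assume "reaches (aux_V V M - Some ` C) (aux_E V E M A) (Some w) {None}"
  then obtain hp where hp: "is_path (aux_V V M - Some ` C) (aux_E V E M A) hp" "hd hp = Some w"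
    "last hp = None" unfolding reaches_singleton by blast
  define B where "B = butlast hp"
  have hpB: "hp = B @ [None]"
    using is_path_nonempty[OF hp(1)] hp(3) unfolding B_def by (metis append_butlast_last_id)
  have B_ne: "B \<noteq> []" using hpB hp(2) by auto
  have hp': "distinct (B @ [None])" "set (B @ [None]) \<subseteq> aux_V V M - Some ` C"
    "successively (aux_E V E M A) (B @ [None])"
    using hp(1) hpB unfolding is_path_iff_successively by auto
  have B_Some: "set B \<subseteq> Some ` (V - M - C)" using hp'(1,2) unfolding aux_V_def by auto
  define p where "p = map the B"
  have Bp: "B = map Some p"
    unfolding p_def map_map by (rule sym, rule map_idI) (use B_Some in auto)
  have "successively (aux_E V E M A) B" "aux_E V E M A (last B) None"
    using hp'(3) B_ne by (auto simp: successively_append_iff)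
  then have "successively E p" "last p \<in> A"
    using B_ne unfolding Bp by (auto simp: successively_map aux_E_def last_map elim: successively_mono)
  moreover have "distinct p" "set p \<subseteq> V - M - C" "p \<noteq> []"
    using hp'(1) B_Some B_ne unfolding Bp by (auto simp: distinct_map)
  moreover have "hd p = w" using hp(2) B_ne unfolding hpB Bp by (cases p) auto
  ultimately show "reaches (V - M - C) E w A"
    unfolding reaches_def is_path_iff_successively by blast
next
  assume "reaches (V - M - C) E w A"
  then obtain p where p: "is_path (V - M - C) E p" "hd p = w" "last p \<in> A"
    unfolding reaches_def by blast
  have p': "p \<noteq> []" "distinct p" "set p \<subseteq> V - M - C" "successively E p"
    using p(1) unfolding is_path_iff_successively by auto
  have "successively (aux_E V E M A) (map Some p)"
    using p'(4) unfolding successively_map by (rule successively_mono) (use p'(3) in \<open>auto simp: aux_E_def\<close>)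
  moreover have "aux_E V E M A (last (map Some p)) None" using p(3) p'(1) by (simp add: aux_E_def last_map)
  ultimately have "is_path (aux_V V M - Some ` C) (aux_E V E M A) (map Some p @ [None])"
    using p' unfolding is_path_iff_successively aux_V_def
    by (auto simp: successively_append_iff distinct_map)
  moreover have "hd (map Some p @ [None]) = Some w" using p(2) p'(1) by (cases p) auto
  ultimately show "reaches (aux_V V M - Some ` C) (aux_E V E M A) (Some w) {None}"
    unfolding reaches_singleton by (metis last_snoc)
qed

lemma cut_size_aux_eq_Least:
  assumes "w \<notin> A"
  shows "cut_size (aux_V V M) (aux_E V E M A) (Some w) None =
    (LEAST n. \<exists>C. C \<subseteq> V - M - {w} \<and> card C = n \<and> \<not> reaches (V - M - C) E w A)"
proof -
  have HV: "aux_V V M - {Some w, None} = Some ` (V - M - {w})" unfolding aux_V_def by auto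
  have "(\<exists>C'. C' \<subseteq> aux_V V M - {Some w, None} \<and> card C' = n \<and>
          \<not> reaches (aux_V V M - C') (aux_E V E M A) (Some w) {None}) \<longleftrightarrow>
        (\<exists>C. C \<subseteq> V - M - {w} \<and> card C = n \<and> \<not> reaches (V - M - C) E w A)" for n
  proof
    assume "\<exists>C'. C' \<subseteq> aux_V V M - {Some w, None} \<and> card C' = n \<and>
          \<not> reaches (aux_V V M - C') (aux_E V E M A) (Some w) {None}"
    then obtain C where C: "C \<subseteq> V - M - {w}" "card (Some ` C) = n"
        "\<not> reaches (aux_V V M - Some ` C) (aux_E V E M A) (Some w) {None}"
      unfolding HV subset_image_iff by blast
    have "card C = n" using C(2) by (simp add: card_image)
    then show "\<exists>C. C \<subseteq> V - M - {w} \<and> card C = n \<and> \<not> reaches (V - M - C) E w A"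
      using C(1,3) unfolding reaches_aux_iff by blast
  next
    assume "\<exists>C. C \<subseteq> V - M - {w} \<and> card C = n \<and> \<not> reaches (V - M - C) E w A"
    then obtain C where C: "C \<subseteq> V - M - {w}" "card C = n" "\<not> reaches (V - M - C) E w A"
      by blast
    have "Some ` C \<subseteq> aux_V V M - {Some w, None}" "card (Some ` C) = n"
      using C(1,2) unfolding HV by (auto simp: card_image)
    then show "\<exists>C'. C' \<subseteq> aux_V V M - {Some w, None} \<and> card C' = n \<and>
          \<not> reaches (aux_V V M - C') (aux_E V E M A) (Some w) {None}"
      using C(3) unfolding reaches_aux_iff[symmetric] by blast
  qed
  moreover have "\<not> aux_E V E M A (Some w) None" using assms by (simp add: aux_E_def)
  ultimately show ?thesis unfolding cut_size_def reaches_singleton[symmetric] by simp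
qed

lemma cut_size_aux_adjacent:
  assumes "finite V" "w \<in> A"
  shows "cut_size (aux_V V M) (aux_E V E M A) (Some w) None = card (V - M)"
proof -
  have "aux_V V M - {None} = Some ` (V - M)" unfolding aux_V_def by auto
  then show ?thesis using assms(2) unfolding cut_size_def by (simp add: aux_E_def card_image)
qed

lemma reaches_if_card_less_cut_size:
  assumes w: "w \<in> V - M" and X: "X \<subseteq> V - M" "w \<notin> X"
    and less: "card X < cut_size (aux_V V M) (aux_E V E M A) (Some w) None"
  shows "reaches (V - M - X) E w A"
proof (cases "w \<in> A")
  case True
  then show ?thesis using w X unfolding reaches_def by (intro exI[of _ "[w]"]) simp
next
  case False
  show ?thesis
  proof (rule ccontr)
    assume no_path: "\<not> reaches (V - M - X) E w A"
    have "cut_size (aux_V V M) (aux_E V E M A) (Some w) None \<le> card X"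
      unfolding cut_size_aux_eq_Least[OF False] using X no_path by (intro Least_le) blast
    then show False using less by simp
  qed
qed

lemma separator_if_cut_size_le:
  assumes w: "w \<in> V - M" "w \<notin> A"
    and le: "cut_size (aux_V V M) (aux_E V E M A) (Some w) None \<le> r"
  obtains C where "C \<subseteq> V - M - {w}" "card C \<le> r" "\<not> reaches (V - M - C) E w A"
proof -
  let ?P = "\<lambda>n. \<exists>C. C \<subseteq> V - M - {w} \<and> card C = n \<and> \<not> reaches (V - M - C) E w A"
  have "\<not> reaches (V - M - (V - M - {w})) E w A"
  proof
    assume "reaches (V - M - (V - M - {w})) E w A"
    then obtain p where p: "is_path (V - M - (V - M - {w})) E p" "last p \<in> A"
      unfolding reaches_def by blast
    have "last p \<in> V - M - (V - M - {w})"
      using is_path_subset[OF p(1)] last_in_set[OF is_path_nonempty[OF p(1)]] by blast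
    then show False using w p(2) by blast
  qed
  then have "?P (LEAST n. ?P n)" by (intro LeastI[of ?P]) blast
  then obtain C where C: "C \<subseteq> V - M - {w}" "card C = (LEAST n. ?P n)" "\<not> reaches (V - M - C) E w A"
    by blast
  show ?thesis
    using that[OF C(1) _ C(3)] C(2) le unfolding cut_size_aux_eq_Least[OF w(2)] by simp
qed

lemma Gamma_ge_iff:
  assumes "finite S" "S \<noteq> {}"
  shows "r \<le> Gamma HV HE (Some ` S) t \<longleftrightarrow> (\<forall>w\<in>S. r \<le> cut_size HV HE (Some w) t)"
  unfolding Gamma_def using assms by (simp add: image_image)

section \<open>CSP paths and identifiability\<close>

lemma path_to_first_monitor:
  assumes "is_path V E (w # ys)" "w \<notin> M" "\<exists>x\<in>set ys. x \<in> M"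
  obtains as m where "is_path (V - M) E (w # as)" "m \<in> M" "E (last (w # as)) m"
    "set as \<subseteq> set ys" "m \<in> set ys"
proof -
  obtain as m bs where ys: "ys = as @ m # bs" "m \<in> M" "\<forall>y\<in>set as. y \<notin> M"
    using assms(3) by (rule split_list_first_propE)
  have "is_path V E ((w # as) @ m # bs)" using assms(1) ys(1) by simp
  then have "is_path V E (w # as)" "E (last (w # as)) m"
    using is_path_append[of "w # as" "m # bs"] by auto
  moreover have "is_path (V - M) E (w # as)"
    by (rule is_path_mono[OF calculation(1)]) (use is_path_subset[OF calculation(1)] ys(3) assms(2) in auto)
  ultimately show ?thesis using that ys by auto
qed

lemma CSP_path_two_sides:
  assumes sym: "\<And>a b. E a b \<Longrightarrow> E b a" and p: "p \<in> CSP_paths V E M" and w: "w \<in> set p" "w \<notin> M"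
  obtains as1 m1 as2 m2 where "is_path (V - M) E (w # as1)" "is_path (V - M) E (w # as2)"
    "m1 \<in> M" "m2 \<in> M" "m1 \<noteq> m2" "E (last (w # as1)) m1" "E (last (w # as2)) m2"
    "set as1 \<inter> set as2 = {}" "set as1 \<subseteq> set p" "set as2 \<subseteq> set p"
proof -
  have p': "is_path V E p" "hd p \<in> M" "last p \<in> M" using p unfolding CSP_paths_def by auto
  obtain xs ys where ps: "p = xs @ w # ys" using w(1) by (meson split_list)
  have xs: "xs \<noteq> []" using ps p'(2) w(2) by (cases xs) auto
  have ys: "ys \<noteq> []" using ps p'(3) w(2) by auto
  have wys: "is_path V E (w # ys)" and disj: "set xs \<inter> set (w # ys) = {}"
    using p'(1) is_path_append[OF xs, of "w # ys"] unfolding ps by auto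
  have "is_path V E (xs @ [w])"
    using p'(1) is_path_append[of "xs @ [w]" ys] ys unfolding ps by auto
  then have wxs: "is_path V E (w # rev xs)" using is_path_rev[OF sym] by fastforce
  have "\<exists>x\<in>set ys. x \<in> M" using p'(3) ps ys last_in_set by fastforce
  then obtain as2 m2 where R: "is_path (V - M) E (w # as2)" "m2 \<in> M" "E (last (w # as2)) m2"
    "set as2 \<subseteq> set ys" "m2 \<in> set ys"
    using path_to_first_monitor[OF wys w(2)] by blast
  have "\<exists>x\<in>set (rev xs). x \<in> M" using p'(2) ps xs hd_in_set by fastforce
  then obtain as1 m1 where L: "is_path (V - M) E (w # as1)" "m1 \<in> M" "E (last (w # as1)) m1"
    "set as1 \<subseteq> set xs" "m1 \<in> set xs"
    using path_to_first_monitor[OF wxs w(2)] by auto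
  have "m1 \<noteq> m2" "set as1 \<inter> set as2 = {}" using L(4,5) R(4,5) disj by auto
  moreover have "set as1 \<subseteq> set p" "set as2 \<subseteq> set p" using L(4) R(4) ps by auto
  ultimately show ?thesis using that L(1-3) R(1-3) by blast
qed

lemma reaches_monitor:
  assumes G: "sgraph V E" and M': "M' \<subseteq> M" and X: "X \<subseteq> V - M"
    and reach: "reaches (V - M - X) E w (mon_nbrs V E M M')"
  shows "reaches (V - X - (M - M')) E w M'"
proof -
  obtain q where q: "is_path (V - M - X) E q" "hd q = w" "last q \<in> mon_nbrs V E M M'"
    using reach unfolding reaches_def by blast
  obtain m where m: "m \<in> M'" "E m (last q)" using q(3) unfolding mon_nbrs_def by blast
  have "m \<in> V" "E (last q) m" using G m(2) unfolding sgraph_def by blast+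
  have "is_path (V - X - (M - M')) E q"
    by (rule is_path_mono[OF q(1)]) (use is_path_subset[OF q(1)] in blast)
  moreover have "is_path (V - X - (M - M')) E [m]" using \<open>m \<in> V\<close> m(1) X M' by auto
  moreover have "set q \<inter> set [m] = {}" using is_path_subset[OF q(1)] m(1) M' by auto
  ultimately have "is_path (V - X - (M - M')) E (q @ [m])"
    using \<open>E (last q) m\<close> is_path_append[OF is_path_nonempty[OF q(1)]] by simp
  then show ?thesis using q(2) m(1) is_path_nonempty[OF q(1)] unfolding reaches_def
    by (intro exI[of _ "q @ [m]"]) simp
qed

lemma two_fan_to_monitors:
  assumes G: "sgraph V E" and w: "w \<in> V - M" and F: "F \<subseteq> V - M" "w \<notin> F" "card F \<le> k"
    and cut: "k + 2 \<le> cut_size (aux_V V M) (aux_E V E M (mon_nbrs V E M M)) (Some w) None"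
    and cut_m: "\<forall>m\<in>M. k + 1 \<le> cut_size (aux_V V M) (aux_E V E M (mon_nbrs V E M (M - {m}))) (Some w) None"
  shows "two_fan (V - F) E w M"
proof (rule two_fan_if_no_separating_vertex)
  have fin: "finite V" using G unfolding sgraph_def by blast
  then show "finite (V - F)" by blast
  show "E b a" if "E a b" for a b using G that unfolding sgraph_def by blast
  show "w \<notin> M" using w by blast
  have "reaches (V - M - F) E w (mon_nbrs V E M M)"
    using cut F by (intro reaches_if_card_less_cut_size[OF w F(1,2)]) simp
  then show "reaches (V - F) E w M" using reaches_monitor[OF G subset_refl F(1)] by simp
  show "reaches (V - F - {x}) E w (M - {x})" if x: "x \<in> V - F" "x \<noteq> w" for x
  proof (cases "x \<in> M")
    case True
    have "reaches (V - M - F) E w (mon_nbrs V E M (M - {x}))"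
      using cut_m True F by (intro reaches_if_card_less_cut_size[OF w F(1,2)]) fastforce
    moreover have "V - F - (M - (M - {x})) = V - F - {x}" using True by blast
    ultimately show ?thesis using reaches_monitor[where M'="M - {x}", OF G Diff_subset F(1)] by simp
  next
    case False
    have "finite F" using F(1) fin finite_subset by blast
    then have "card (insert x F) < cut_size (aux_V V M) (aux_E V E M (mon_nbrs V E M M)) (Some w) None"
      using cut F(3) by (simp add: card_insert_if)
    then have "reaches (V - M - insert x F) E w (mon_nbrs V E M M)"
      using x F False w by (intro reaches_if_card_less_cut_size[OF w]) auto
    moreover have "insert x F \<subseteq> V - M" using x F(1) False by blast
    ultimately have "reaches (V - insert x F) E w M" using reaches_monitor[OF G subset_refl] by simp
    moreover have "V - insert x F = V - F - {x}" "M - {x} = M" using False by auto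
    ultimately show ?thesis by simp
  qed
qed

lemma CSP_path_of_two_fan:
  assumes fan: "two_fan W E w M" and w: "w \<notin> M" and sym: "\<And>a b. E a b \<Longrightarrow> E b a"
    and W: "W \<subseteq> V"
  obtains p where "p \<in> CSP_paths V E M" "w \<in> set p" "set p \<subseteq> W"
proof -
  obtain p q where pq: "is_path W E p" "is_path W E q" "hd p = w" "hd q = w"
     "last p \<in> M" "last q \<in> M" "last p \<noteq> last q" "set p \<inter> set q = {w}"
    using fan unfolding two_fan_def by blast
  obtain q' where q: "q = w # q'" using pq(2,4) is_path_nonempty by (metis list.collapse)
  have q': "q' \<noteq> []" using q pq(6) w by auto
  then have "is_path W E q'" "E w (hd q')" "w \<notin> set q'" using pq(2) q by (auto simp: is_path_Cons)
  moreover have "p \<noteq> []" using is_path_nonempty[OF pq(1)] .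
  moreover have "set (rev p) \<inter> set q' = {}" using pq(8) q \<open>w \<notin> set q'\<close> by auto
  ultimately have path: "is_path W E (rev p @ q')"
    using is_path_rev[OF sym pq(1)] pq(3) q' by (simp add: is_path_append last_rev)
  have "hd (rev p @ q') = last p" "last (rev p @ q') = last q" "w \<in> set (rev p @ q')"
    using \<open>p \<noteq> []\<close> q q' pq(3) by (auto simp: hd_rev)
  moreover have "is_path V E (rev p @ q')" using is_path_mono[OF path] is_path_subset[OF path] W by blast
  ultimately show ?thesis
    using that[of "rev p @ q'"] pq(5-7) is_path_subset[OF path] unfolding CSP_paths_def by auto
qed

lemma avoiding_path_if_cut_sizes:
  assumes G: "sgraph V E" and w: "w \<in> V - M" and F: "F \<subseteq> V - M" "w \<notin> F" "card F \<le> k"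
    and cut: "k + 2 \<le> cut_size (aux_V V M) (aux_E V E M (mon_nbrs V E M M)) (Some w) None"
    and cut_m: "\<forall>m\<in>M. k + 1 \<le> cut_size (aux_V V M) (aux_E V E M (mon_nbrs V E M (M - {m}))) (Some w) None"
  shows "\<exists>p\<in>CSP_paths V E M. w \<in> set p \<and> set p \<inter> F = {}"
proof -
  have fan: "two_fan (V - F) E w M" using two_fan_to_monitors[OF assms] .
  have sym: "\<And>a b. E a b \<Longrightarrow> E b a" using G unfolding sgraph_def by blast
  have "w \<notin> M" using w by blast
  then obtain p where "p \<in> CSP_paths V E M" "w \<in> set p" "set p \<subseteq> V - F"
    using CSP_path_of_two_fan[OF fan _ sym Diff_subset] by blast
  then show ?thesis by blast
qed

lemma k_identifiable_if_avoiding_paths: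
  assumes "\<And>w F. w \<in> S \<Longrightarrow> F \<subseteq> V - M \<Longrightarrow> w \<notin> F \<Longrightarrow> card F \<le> k \<Longrightarrow>
      \<exists>p\<in>CSP_paths V E M. w \<in> set p \<and> set p \<inter> F = {}"
  shows "k_identifiable V E M k S"
  unfolding k_identifiable_def
proof (intro allI impI)
  fix F1 F2
  assume F: "F1 \<subseteq> V - M \<and> F2 \<subseteq> V - M \<and> card F1 \<le> k \<and> card F2 \<le> k \<and> F1 \<inter> S \<noteq> F2 \<inter> S"
  have distinguished: "fail_paths (CSP_paths V E M) F \<noteq> fail_paths (CSP_paths V E M) F'"
    if w: "w \<in> S" "w \<in> F" "w \<notin> F'" "F' \<subseteq> V - M" "card F' \<le> k" for w F F'
  proof -
    obtain p where "p \<in> CSP_paths V E M" "w \<in> set p" "set p \<inter> F' = {}" using assms[OF w(1,4,3,5)] by blast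
    then show ?thesis using w(2) unfolding fail_paths_def by blast
  qed
  from F obtain w where "w \<in> S" "w \<in> F1 \<and> w \<notin> F2 \<or> w \<in> F2 \<and> w \<notin> F1" by blast
  then show "fail_paths (CSP_paths V E M) F1 \<noteq> fail_paths (CSP_paths V E M) F2"
    using distinguished F by metis
qed

lemma side_meets_separator:
  assumes sym: "\<And>a b. E a b \<Longrightarrow> E b a"
    and side: "is_path (V - M) E (w # as)" "E (last (w # as)) m" "m \<in> M'" "w \<notin> C"
    and sep: "\<not> reaches (V - M - C) E w (mon_nbrs V E M M')"
  shows "set as \<inter> C \<noteq> {}"
proof
  assume "set as \<inter> C = {}"
  have "is_path (V - M - C) E (w # as)"
    by (rule is_path_mono[OF side(1)]) (use is_path_subset[OF side(1)] side(4) \<open>set as \<inter> C = {}\<close> in auto)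
  moreover have "last (w # as) \<in> mon_nbrs V E M M'"
    using is_path_subset[OF side(1)] last_in_set[of "w # as"] sym[OF side(2)] side(3)
    unfolding mon_nbrs_def by auto
  ultimately show False using sep unfolding reaches_def by force
qed

lemma avoiding_path_if_k_identifiable:
  assumes "k_identifiable V E M k S" "w \<in> S" "w \<in> V - M" "F \<subseteq> V - M" "w \<notin> F" "finite F"
    "card F < k"
  shows "\<exists>p\<in>CSP_paths V E M. w \<in> set p \<and> set p \<inter> F = {}"
proof (rule ccontr)
  assume "\<not> ?thesis"
  then have "fail_paths (CSP_paths V E M) (insert w F) = fail_paths (CSP_paths V E M) F"
    unfolding fail_paths_def by blast
  moreover have "card (insert w F) \<le> k" using assms(6,7) by (simp add: card_insert_if)
  moreover have "insert w F \<inter> S \<noteq> F \<inter> S" using assms(2,5) by blast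
  ultimately show False using assms(1,3,4,7) unfolding k_identifiable_def
    by (metis insert_subset less_imp_le)
qed

text \<open>The two halves of a CSP path through \<open>w\<close> cross the cut at different nodes, so one of
  them avoids any single node of the cut.\<close>
lemma cut_size_all_monitors_if_k_identifiable:
  assumes G: "sgraph V E" and kid: "k_identifiable V E M k S" and w: "w \<in> S" "S \<subseteq> V - M"
    and k: "k + 1 \<le> card (V - M)" "1 \<le> k"
  shows "k + 1 \<le> cut_size (aux_V V M) (aux_E V E M (mon_nbrs V E M M)) (Some w) None"
proof (rule ccontr)
  assume "\<not> ?thesis"
  then have le: "cut_size (aux_V V M) (aux_E V E M (mon_nbrs V E M M)) (Some w) None \<le> k" by simp
  have fin: "finite V" and sym: "\<And>a b. E a b \<Longrightarrow> E b a" using G unfolding sgraph_def by blast+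
  have wN: "w \<in> V - M" using w by blast
  have "w \<notin> mon_nbrs V E M M"
  proof
    assume "w \<in> mon_nbrs V E M M"
    then show False using cut_size_aux_adjacent[OF fin, of w _ M E] le k(1) by simp
  qed
  then obtain C where C: "C \<subseteq> V - M - {w}" "card C \<le> k"
    "\<not> reaches (V - M - C) E w (mon_nbrs V E M M)"
    using separator_if_cut_size_le[OF wN _ le] by blast
  have "finite C" using C(1) fin finite_subset by blast
  obtain c where c: "card (C - {c}) < k"
  proof (cases "C = {}")
    case True
    then show ?thesis using that k(2) by simp
  next
    case False
    then obtain c where "c \<in> C" by blast
    moreover have "card C > 0" using False \<open>finite C\<close> by (simp add: card_gt_0_iff)
    ultimately show ?thesis using that[of c] C(2) by simp
  qed
  moreover have "C - {c} \<subseteq> V - M" "w \<notin> C - {c}" "finite (C - {c})" using C(1) \<open>finite C\<close> by auto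
  ultimately obtain p where p: "p \<in> CSP_paths V E M" "w \<in> set p" "set p \<inter> (C - {c}) = {}"
    using avoiding_path_if_k_identifiable[OF kid w(1) wN] by blast
  obtain as1 m1 as2 m2 where sides: "is_path (V - M) E (w # as1)" "is_path (V - M) E (w # as2)"
    "m1 \<in> M" "m2 \<in> M" "m1 \<noteq> m2" "E (last (w # as1)) m1" "E (last (w # as2)) m2"
    "set as1 \<inter> set as2 = {}" "set as1 \<subseteq> set p" "set as2 \<subseteq> set p"
    using CSP_path_two_sides[OF sym p(1,2)] wN by (metis Diff_iff)
  have "w \<notin> C" using C(1) by blast
  then obtain c1 c2 where "c1 \<in> set as1 \<inter> C" "c2 \<in> set as2 \<inter> C"
    using side_meets_separator[OF sym sides(1,6,3) _ C(3)] side_meets_separator[OF sym sides(2,7,4) _ C(3)]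
    by blast
  moreover from this have "c1 \<noteq> c2" using sides(8) by blast
  ultimately have "c1 \<in> set p \<inter> (C - {c}) \<or> c2 \<in> set p \<inter> (C - {c})" using sides(9,10) by blast
  then show False using p(3) by blast
qed

lemma cut_size_other_monitors_if_k_identifiable:
  assumes G: "sgraph V E" and kid: "k_identifiable V E M k S" and w: "w \<in> S" "S \<subseteq> V - M"
    and k: "k + 1 \<le> card (V - M)" "1 \<le> k" and m: "m \<in> M"
  shows "k \<le> cut_size (aux_V V M) (aux_E V E M (mon_nbrs V E M (M - {m}))) (Some w) None"
proof (rule ccontr)
  assume "\<not> ?thesis"
  then have le: "cut_size (aux_V V M) (aux_E V E M (mon_nbrs V E M (M - {m}))) (Some w) None \<le> k - 1"
    by simp
  have fin: "finite V" and sym: "\<And>a b. E a b \<Longrightarrow> E b a" using G unfolding sgraph_def by blast+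
  have wN: "w \<in> V - M" using w by blast
  have "w \<notin> mon_nbrs V E M (M - {m})"
  proof
    assume "w \<in> mon_nbrs V E M (M - {m})"
    then show False using cut_size_aux_adjacent[OF fin, of w _ M E] le k(1) by simp
  qed
  then obtain C where C: "C \<subseteq> V - M - {w}" "card C \<le> k - 1"
    "\<not> reaches (V - M - C) E w (mon_nbrs V E M (M - {m}))"
    using separator_if_cut_size_le[OF wN _ le] by blast
  have "finite C" using C(1) fin finite_subset by blast
  moreover have "C \<subseteq> V - M" "w \<notin> C" "card C < k" using C(1,2) k(2) by auto
  ultimately obtain p where p: "p \<in> CSP_paths V E M" "w \<in> set p" "set p \<inter> C = {}"
    using avoiding_path_if_k_identifiable[OF kid w(1) wN] by blast
  obtain as1 m1 as2 m2 where sides: "is_path (V - M) E (w # as1)" "is_path (V - M) E (w # as2)"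
    "m1 \<in> M" "m2 \<in> M" "m1 \<noteq> m2" "E (last (w # as1)) m1" "E (last (w # as2)) m2"
    "set as1 \<inter> set as2 = {}" "set as1 \<subseteq> set p" "set as2 \<subseteq> set p"
    using CSP_path_two_sides[OF sym p(1,2)] wN by (metis Diff_iff)
  consider "m1 \<in> M - {m}" | "m2 \<in> M - {m}" using sides(3-5) by blast
  then have "set as1 \<inter> C \<noteq> {} \<or> set as2 \<inter> C \<noteq> {}"
  proof cases
    case 1
    then show ?thesis using side_meets_separator[OF sym sides(1,6) 1 \<open>w \<notin> C\<close> C(3)] by blast
  next
    case 2
    then show ?thesis using side_meets_separator[OF sym sides(2,7) 2 \<open>w \<notin> C\<close> C(3)] by blast
  qed
  then show False using sides(9,10) p(3) by blast
qed

theorem theorem2: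
  fixes V :: "'a set" and E :: "'a \<Rightarrow> 'a \<Rightarrow> bool" and M S :: "'a set" and k :: nat
  assumes "sgraph V E" and "connected_graph V E"
    and "M \<subseteq> V" and "S \<subseteq> V - M" and "S \<noteq> {}" and "k \<ge> 1"
  shows
    "(k + 2 \<le> card (V - M) \<and>
      Gamma (aux_V V M) (aux_E V E M (mon_nbrs V E M M)) (Some ` S) None \<ge> k + 2 \<and>
      (\<forall>m\<in>M. Gamma (aux_V V M) (aux_E V E M (mon_nbrs V E M (M - {m}))) (Some ` S) None \<ge> k + 1)
      \<longrightarrow> k_identifiable V E M k S)
   \<and>
    (k + 1 \<le> card (V - M) \<and> k_identifiable V E M k S
      \<longrightarrow> Gamma (aux_V V M) (aux_E V E M (mon_nbrs V E M M)) (Some ` S) None \<ge> k + 1 \<and>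
          (\<forall>m\<in>M. Gamma (aux_V V M) (aux_E V E M (mon_nbrs V E M (M - {m}))) (Some ` S) None \<ge> k))"
proof -
  have "finite S" using assms(1,4) finite_subset unfolding sgraph_def by blast
  note Gamma = Gamma_ge_iff[OF this assms(5)]
  show ?thesis
  proof (intro conjI impI ballI)
    assume "k + 2 \<le> card (V - M) \<and>
      k + 2 \<le> Gamma (aux_V V M) (aux_E V E M (mon_nbrs V E M M)) (Some ` S) None \<and>
      (\<forall>m\<in>M. k + 1 \<le> Gamma (aux_V V M) (aux_E V E M (mon_nbrs V E M (M - {m}))) (Some ` S) None)"
    then have cuts: "k + 2 \<le> cut_size (aux_V V M) (aux_E V E M (mon_nbrs V E M M)) (Some w) None"
      "\<forall>m\<in>M. k + 1 \<le> cut_size (aux_V V M) (aux_E V E M (mon_nbrs V E M (M - {m}))) (Some w) None"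
      if "w \<in> S" for w
      using that unfolding Gamma by auto
    show "k_identifiable V E M k S"
    proof (rule k_identifiable_if_avoiding_paths)
      fix w F assume w: "w \<in> S" and F: "F \<subseteq> V - M" "w \<notin> F" "card F \<le> k"
      have "w \<in> V - M" using w assms(4) by blast
      then show "\<exists>p\<in>CSP_paths V E M. w \<in> set p \<and> set p \<inter> F = {}"
        by (rule avoiding_path_if_cut_sizes[OF assms(1) _ F cuts[OF w]])
    qed
  next
    assume "k + 1 \<le> card (V - M) \<and> k_identifiable V E M k S"
    then show "k + 1 \<le> Gamma (aux_V V M) (aux_E V E M (mon_nbrs V E M M)) (Some ` S) None"
      unfolding Gamma using cut_size_all_monitors_if_k_identifiable[OF assms(1) _ _ assms(4) _ assms(6)]
      by blast
  next
    fix m assume "m \<in> M" and "k + 1 \<le> card (V - M) \<and> k_identifiable V E M k S"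
    then show "k \<le> Gamma (aux_V V M) (aux_E V E M (mon_nbrs V E M (M - {m}))) (Some ` S) None"
      unfolding Gamma
      using cut_size_other_monitors_if_k_identifiable[OF assms(1) _ _ assms(4) _ assms(6)] by blast
  qed
qed

end
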